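(* In the setting of the cyclic BCD algorithm for the group LASSO problem $\min \Phi$ described below, for any $\epsilon>0$ the total number of arithmetic operations needed by the algorithm to reach an iterate with $\Gamma^{(t)}-\Gamma^\ast\le\epsilon$ is $\mathcal{O}\big((L+\tau_{\max})\tau_{\max}MN/\epsilon\big)$, where the hidden constant does not depend on $\epsilon$ (each block update costs $\mathcal{O}((L+\tau_{\max})M)$ operations when the residual $\mathbf{Y}-\sqrt{p}\sum_{n,\tau}\mathbf{a}^{\rm ext}_{n,\tau}\mathbf{x}_{n,\tau}^T$ is maintained and updated incrementally).
   Context: Let $N,L,M\ge1$, $\tau_{\max}\ge1$ be integers, $p>0$, $\rho>0$, $\mathbf{Y}\in\mathbb{C}^{(L+\tau_{\max})\times M}$. For $n=1,\ldots,N$, $\mathbf{a}_n=[a_{n,1},\ldots,a_{n,L}]^T$ with $|a_{n,l}|=1$, and for $\tau=0,\ldots,\tau_{\max}$, $\mathbf{a}^{\rm ext}_{n,\tau}\in\mathbb{C}^{L+\tau_{\max}}$ is $\mathbf{a}_n$ preceded by $\tau$ zeros and followed by $\tau_{\max}-\tau$ zeros. The objective is $\Phi(\{\mathbf{x}_{n,\tau}\})=\tfrac12\|\mathbf{Y}-\sqrt{p}\sum_{n,\tau}\mathbf{a}^{\rm ext}_{n,\tau}\mathbf{x}_{n,\tau}^T\|_F^2+\rho\sum_{n,\tau}\|\mathbf{x}_{n,\tau}\|_2$ over $\mathbf{x}_{n,\tau}\in\mathbb{C}^M$, with optimal value $\Gamma^\ast$. The algorithm starts from all $\mathbf{x}_{n,\tau}=\mathbf{0}$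 and, in each outer iteration, visits the $(\tau_{\max}+1)N$ blocks once in lexicographic order, replacing the visited block $\mathbf{x}_{\bar n,\bar\tau}$ by its exact block minimizer: with $\tilde{\mathbf{Y}}_{\bar n,\bar\tau}=\mathbf{Y}-\sqrt{p}\sum_{(n,\tau)\ne(\bar n,\bar\tau)}\mathbf{a}^{\rm ext}_{n,\tau}\mathbf{x}_{n,\tau}^T$ and $\mathbf{u}=(\mathbf{a}^{\rm ext}_{\bar n,\bar\tau})^H\tilde{\mathbf{Y}}_{\bar n,\bar\tau}$, set $\mathbf{x}_{\bar n,\bar\tau}^T=\big(\frac{1}{L\sqrt p}-\frac{\rho}{Lp\|\mathbf{u}\|_2}\big)\mathbf{u}$ if $\|\mathbf{u}\|_2>\rho/\sqrt p$ and $\mathbf{0}$ otherwise. $\Gamma^{(t)}$ is the value of $\Phi$ after the $t$-th outer iteration. *)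

theory Defs
  imports "HOL-Analysis.Analysis"
begin

text \<open>Conventions (0-based indices): rows i < L + tmax, columns m < M,
  users n < N, delays tau \<le> tmax, pilot entries l < L.
  Y :: nat \<Rightarrow> nat \<Rightarrow> complex  (Y i m),
  a :: nat \<Rightarrow> nat \<Rightarrow> complex  (a n l),
  x :: nat \<Rightarrow> nat \<Rightarrow> nat \<Rightarrow> complex  (x n tau m = m-th entry of block x_{n,tau}).\<close>

definition a_ext :: "nat \<Rightarrow> (nat \<Rightarrow> nat \<Rightarrow> complex) \<Rightarrow> nat \<Rightarrow> nat \<Rightarrow> nat \<Rightarrow> complex" where
  "a_ext L a n tau i = (if tau \<le> i \<and> i < tau + L then a n (i - tau) else 0)"

definition Phi :: "nat \<Rightarrow> nat \<Rightarrow> nat \<Rightarrow> nat \<Rightarrow> real \<Rightarrow> real \<Rightarrow> (nat \<Rightarrow> nat \<Rightarrow> complex)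
    \<Rightarrow> (nat \<Rightarrow> nat \<Rightarrow> complex) \<Rightarrow> (nat \<Rightarrow> nat \<Rightarrow> nat \<Rightarrow> complex) \<Rightarrow> real" where
  "Phi N L M tmax p \<rho> Y a x =
     (1/2) * (\<Sum>i<L + tmax. \<Sum>m<M.
        (cmod (Y i m - complex_of_real (sqrt p) *
           (\<Sum>n<N. \<Sum>tau\<le>tmax. a_ext L a n tau i * x n tau m)))\<^sup>2)
     + \<rho> * (\<Sum>n<N. \<Sum>tau\<le>tmax. sqrt (\<Sum>m<M. (cmod (x n tau m))\<^sup>2))"

definition Gamma_opt :: "nat \<Rightarrow> nat \<Rightarrow> nat \<Rightarrow> nat \<Rightarrow> real \<Rightarrow> real \<Rightarrow> (nat \<Rightarrow> nat \<Rightarrow> complex)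
    \<Rightarrow> (nat \<Rightarrow> nat \<Rightarrow> complex) \<Rightarrow> real" where
  "Gamma_opt N L M tmax p \<rho> Y a = (INF x. Phi N L M tmax p \<rho> Y a x)"

text \<open>Exact block minimizer update of block (nb, tb).\<close>
definition block_update :: "nat \<Rightarrow> nat \<Rightarrow> nat \<Rightarrow> nat \<Rightarrow> real \<Rightarrow> real \<Rightarrow> (nat \<Rightarrow> nat \<Rightarrow> complex)
    \<Rightarrow> (nat \<Rightarrow> nat \<Rightarrow> complex) \<Rightarrow> (nat \<Rightarrow> nat \<Rightarrow> nat \<Rightarrow> complex) \<Rightarrow> nat \<times> nat
    \<Rightarrow> (nat \<Rightarrow> nat \<Rightarrow> nat \<Rightarrow> complex)" where
  "block_update N L M tmax p \<rho> Y a x blk =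
     (let nb = fst blk; tb = snd blk;
          Yt = (\<lambda>i m. Y i m - complex_of_real (sqrt p) *
                 (\<Sum>n<N. \<Sum>tau\<le>tmax. if (n, tau) = (nb, tb) then 0
                                      else a_ext L a n tau i * x n tau m));
          u = (\<lambda>m. \<Sum>i<L + tmax. cnj (a_ext L a nb tb i) * Yt i m);
          nu = sqrt (\<Sum>m<M. (cmod (u m))\<^sup>2);
          newblk = (\<lambda>m. if m < M \<and> nu > \<rho> / sqrt p
                        then complex_of_real (1 / (real L * sqrt p) - \<rho> / (real L * p * nu)) * u m
                        else 0)
      in x(nb := (x nb)(tb := newblk)))"

definition blocks :: "nat \<Rightarrow> nat \<Rightarrow> (nat \<times> nat) list" where
  "blocks N tmax = concat (map (\<lambda>n. map (\<lambda>tau. (n, tau)) [0..<Suc tmax]) [0..<N])"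

definition outer_iter :: "nat \<Rightarrow> nat \<Rightarrow> nat \<Rightarrow> nat \<Rightarrow> real \<Rightarrow> real \<Rightarrow> (nat \<Rightarrow> nat \<Rightarrow> complex)
    \<Rightarrow> (nat \<Rightarrow> nat \<Rightarrow> complex) \<Rightarrow> (nat \<Rightarrow> nat \<Rightarrow> nat \<Rightarrow> complex) \<Rightarrow> (nat \<Rightarrow> nat \<Rightarrow> nat \<Rightarrow> complex)" where
  "outer_iter N L M tmax p \<rho> Y a x = foldl (block_update N L M tmax p \<rho> Y a) x (blocks N tmax)"

definition iterate :: "nat \<Rightarrow> nat \<Rightarrow> nat \<Rightarrow> nat \<Rightarrow> real \<Rightarrow> real \<Rightarrow> (nat \<Rightarrow> nat \<Rightarrow> complex)
    \<Rightarrow> (nat \<Rightarrow> nat \<Rightarrow> complex) \<Rightarrow> nat \<Rightarrow> (nat \<Rightarrow> nat \<Rightarrow> nat \<Rightarrow> complex)" where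
  "iterate N L M tmax p \<rho> Y a t = (outer_iter N L M tmax p \<rho> Y a ^^ t) (\<lambda>_ _ _. 0)"

definition Gamma :: "nat \<Rightarrow> nat \<Rightarrow> nat \<Rightarrow> nat \<Rightarrow> real \<Rightarrow> real \<Rightarrow> (nat \<Rightarrow> nat \<Rightarrow> complex)
    \<Rightarrow> (nat \<Rightarrow> nat \<Rightarrow> complex) \<Rightarrow> nat \<Rightarrow> real" where
  "Gamma N L M tmax p \<rho> Y a t = Phi N L M tmax p \<rho> Y a (iterate N L M tmax p \<rho> Y a t)"

text \<open>Cost model: each block update (with incrementally maintained residual)
  costs (L + tmax) M arithmetic operations, as stated in the paper; an outer
  iteration visits (tmax+1) N blocks.\<close>
definition block_update_ops :: "nat \<Rightarrow> nat \<Rightarrow> nat \<Rightarrow> nat" where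
  "block_update_ops L M tmax = (L + tmax) * M"

definition total_ops :: "nat \<Rightarrow> nat \<Rightarrow> nat \<Rightarrow> nat \<Rightarrow> nat \<Rightarrow> nat" where
  "total_ops N L M tmax t = t * ((Suc tmax) * N) * block_update_ops L M tmax"

end

theory Submission
  imports Defs
begin

(* Each block update is an exact block minimisation, i.e. group soft-thresholding of the
   correlation of the block's pilot with the partial residual. Because the pilots are
   unimodular the block Hessian is p L times the identity, so Phi drops by at least p L / 2
   times the squared step of the block. After a sweep, the optimality condition of a block
   is violated only through the change of its partial gradient caused by the later updates,
   which is Lipschitz in the total step of the sweep. The iterates stay in the sublevel set
   of the starting point, where all entries are bounded by Phi(0) / rho, so the gap
   D t = Gamma(t) - Gamma* satisfies D (t+1) <= K * (total step of sweep t), and by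
   Cauchy-Schwarz q * D (t+1)^2 <= D t - D (t+1). Such sequences decay like 1/t, so
   O(1/epsilon) sweeps of (tmax+1) N updates, each costing (L+tmax) M operations, suffice. *)

lemma reciprocal_sequence_step:
  fixes W q n :: real
  assumes "W > 0" and "q * W \<ge> 2" and "n \<ge> 1"
  shows "W / n \<le> W / (n + 1) + q * (W / (n + 1))\<^sup>2"
proof -
  have "W / n - W / (n + 1) = W / (n * (n + 1))"
    using assms by (simp add: field_simps)
  also have "\<dots> \<le> 2 * W / (n + 1)\<^sup>2"
    using assms by (simp add: divide_simps power2_eq_square mult_left_mono)
  also have "\<dots> \<le> q * W * W / (n + 1)\<^sup>2"
    using assms by (intro divide_right_mono mult_right_mono) auto
  finally show ?thesis
    by (simp add: power_divide power2_eq_square)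
qed

lemma sublinear_rate_of_quadratic_decrease:
  fixes d :: "nat \<Rightarrow> real" and q :: real
  assumes nonneg: "\<And>k. d k \<ge> 0" and "q > 0"
    and decrease: "\<And>k. q * (d (Suc k))\<^sup>2 \<le> d k - d (Suc k)"
  shows "d k \<le> max (d 0) (2 / q) / (real k + 1)"
proof (induction k)
  case 0
  then show ?case by simp
next
  case (Suc k)
  define W where "W = max (d 0) (2 / q)"
  have "W > 0"
    using \<open>q > 0\<close> by (simp add: W_def less_max_iff_disj)
  have "q * (2 / q) \<le> q * W"
    using \<open>q > 0\<close> by (intro mult_left_mono) (auto simp: W_def)
  then have "q * W \<ge> 2"
    using \<open>q > 0\<close> by simp
  define t where "t = W / (real k + 2)"
  show ?case
  proof (rule ccontr)
    assume "\<not> d (Suc k) \<le> max (d 0) (2 / q) / (real (Suc k) + 1)"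
    then have "t < d (Suc k)"
      by (simp add: t_def W_def add.commute)
    moreover have "t \<ge> 0"
      using \<open>W > 0\<close> by (simp add: t_def)
    ultimately have "t + q * t\<^sup>2 < d (Suc k) + q * (d (Suc k))\<^sup>2"
      using \<open>q > 0\<close> by (intro add_less_le_mono mult_left_mono power_mono) auto
    also have "\<dots> \<le> d k"
      using decrease[of k] by simp
    also have "\<dots> \<le> W / (real k + 1)"
      using Suc.IH by (simp add: W_def)
    also have "\<dots> \<le> t + q * t\<^sup>2"
      using reciprocal_sequence_step[OF \<open>W > 0\<close> \<open>q * W \<ge> 2\<close>, of "real k + 1"]
      by (simp add: t_def add.assoc)
    finally show False
      by simp
  qed
qed

lemma iterations_to_accuracy:
  fixes g :: "nat \<Rightarrow> real"
  assumes rate: "\<And>k. g k \<le> W / (real k + 1)" and "W \<ge> 0" and "\<epsilon> > 0"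
  obtains t where "g t \<le> \<epsilon>" and "real t \<le> W / \<epsilon>"
proof
  define t where "t = nat \<lfloor>W / \<epsilon>\<rfloor>"
  have "W / \<epsilon> \<ge> 0"
    using assms by simp
  then have t_le: "real t \<le> W / \<epsilon>" and t_gt: "W / \<epsilon> < real t + 1"
    unfolding t_def by linarith+
  show "real t \<le> W / \<epsilon>"
    by (fact t_le)
  have "W \<le> \<epsilon> * (real t + 1)"
    using t_gt \<open>\<epsilon> > 0\<close> by (simp add: field_simps)
  then have "W / (real t + 1) \<le> \<epsilon>"
    by (simp add: field_simps)
  then show "g t \<le> \<epsilon>"
    using rate[of t] by linarith
qed

lemma sum_eq_single:
  assumes "finite A" and "a \<in> A" and "\<And>x. x \<in> A \<Longrightarrow> x \<noteq> a \<Longrightarrow> f x = 0"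
  shows "sum f A = f a"
  using sum.mono_neutral_right[OF assms(1), of "{a}" f] assms(2,3) by auto

lemma cmod_diff_square:
  "(cmod (z - w))\<^sup>2 = (cmod z)\<^sup>2 - 2 * Re (cnj z * w) + (cmod w)\<^sup>2"
  by (simp only: cmod_power2) (simp add: power2_eq_square algebra_simps)

definition inner_on :: "nat \<Rightarrow> (nat \<Rightarrow> complex) \<Rightarrow> (nat \<Rightarrow> complex) \<Rightarrow> real" where
  "inner_on M u v = (\<Sum>m<M. Re (cnj (u m) * v m))"

definition norm_on :: "nat \<Rightarrow> (nat \<Rightarrow> complex) \<Rightarrow> real" where
  "norm_on M v = sqrt (\<Sum>m<M. (cmod (v m))\<^sup>2)"

lemma norm_on_nonneg: "norm_on M v \<ge> 0"
  by (simp add: norm_on_def sum_nonneg)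

lemma norm_on_scale: "norm_on M (\<lambda>m. of_real c * v m) = \<bar>c\<bar> * norm_on M v"
  by (simp add: norm_on_def norm_mult power_mult_distrib sum_distrib_left[symmetric] real_sqrt_mult)

lemma inner_on_self: "inner_on M v v = (norm_on M v)\<^sup>2"
proof -
  have "Re (cnj z * z) = (cmod z)\<^sup>2" for z
    by (simp only: cmod_power2) (simp add: power2_eq_square)
  then show ?thesis
    by (simp add: inner_on_def norm_on_def sum_nonneg)
qed

lemma inner_on_scale_left: "inner_on M (\<lambda>m. of_real c * u m) v = c * inner_on M u v"
  by (simp add: inner_on_def sum_distrib_left distrib_left mult.assoc)

lemma inner_on_scale_right: "inner_on M u (\<lambda>m. of_real c * v m) = c * inner_on M u v"
  by (simp add: inner_on_def sum_distrib_left mult.left_commute)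

lemma inner_on_cong:
  "(\<And>m. m < M \<Longrightarrow> u m = u' m) \<Longrightarrow> (\<And>m. m < M \<Longrightarrow> v m = v' m)
    \<Longrightarrow> inner_on M u v = inner_on M u' v'"
  by (simp add: inner_on_def)

lemma inner_on_diff_left:
  "inner_on M (\<lambda>m. u m - w m) v = inner_on M u v - inner_on M w v"
  by (simp add: inner_on_def algebra_simps sum_subtractf)

lemma inner_on_diff_right:
  "inner_on M u (\<lambda>m. v m - w m) = inner_on M u v - inner_on M u w"
  by (simp add: inner_on_def algebra_simps sum_subtractf)

lemma inner_on_minus_left: "inner_on M (\<lambda>m. - u m) v = - inner_on M u v"
  by (simp add: inner_on_def sum_negf[symmetric])

lemma inner_on_le_sum_cmod: "inner_on M u v \<le> (\<Sum>m<M. cmod (u m) * cmod (v m))"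
  unfolding inner_on_def
  by (intro sum_mono) (metis complex_Re_le_cmod complex_mod_cnj norm_mult)

lemma inner_on_le_norm_on: "inner_on M u v \<le> norm_on M u * norm_on M v"
proof -
  have "inner_on M u v \<le> (\<Sum>m<M. \<bar>cmod (u m)\<bar> * \<bar>cmod (v m)\<bar>)"
    using inner_on_le_sum_cmod by simp
  also have "\<dots> \<le> L2_set (\<lambda>m. cmod (u m)) {..<M} * L2_set (\<lambda>m. cmod (v m)) {..<M}"
    by (rule L2_set_mult_ineq)
  finally show ?thesis
    by (simp add: norm_on_def L2_set_def)
qed

definition soft_threshold :: "nat \<Rightarrow> real \<Rightarrow> real \<Rightarrow> (nat \<Rightarrow> complex) \<Rightarrow> nat \<Rightarrow> complex" where
  "soft_threshold M \<alpha> \<rho> z m =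
     (if m < M \<and> norm_on M z > \<rho> then of_real ((1 - \<rho> / norm_on M z) / \<alpha>) * z m else 0)"

lemma soft_threshold_optimality_active:
  fixes M :: nat and z v :: "nat \<Rightarrow> complex"
  assumes "\<alpha> > 0" and "\<rho> \<ge> 0" and "norm_on M z > \<rho>"
  defines "w \<equiv> soft_threshold M \<alpha> \<rho> z"
  shows "inner_on M (\<lambda>m. of_real \<alpha> * w m - z m) (\<lambda>m. v m - w m)
           + \<rho> * (norm_on M v - norm_on M w) \<ge> 0"
proof -
  define \<nu> where "\<nu> = norm_on M z"
  define c where "c = (1 - \<rho> / \<nu>) / \<alpha>"
  have "\<nu> > 0" and "c \<ge> 0"
    using assms by (auto simp: \<nu>_def c_def field_simps)
  have w: "w m = of_real c * z m" if "m < M" for m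
    using assms(3) that by (simp add: w_def soft_threshold_def c_def \<nu>_def)
  have inner_w: "inner_on M u w = c * inner_on M u z" for u
  proof -
    have "inner_on M u w = inner_on M u (\<lambda>m. of_real c * z m)"
      by (rule inner_on_cong) (simp_all add: w)
    then show ?thesis
      by (simp add: inner_on_scale_right)
  qed
  have norm_w: "norm_on M w = c * \<nu>"
    using \<open>c \<ge> 0\<close> norm_on_scale[of M c z] w
    by (simp add: \<nu>_def norm_on_def)
  have grad: "inner_on M (\<lambda>m. of_real \<alpha> * w m - z m) u = - (\<rho> / \<nu>) * inner_on M z u" for u
  proof -
    have "of_real \<alpha> * w m - z m = of_real (- (\<rho> / \<nu>)) * z m" if "m < M" for m
      using that \<open>\<alpha> > 0\<close> by (simp add: w c_def field_simps)
    then have "inner_on M (\<lambda>m. of_real \<alpha> * w m - z m) u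
        = inner_on M (\<lambda>m. of_real (- (\<rho> / \<nu>)) * z m) u"
      by (intro inner_on_cong) simp_all
    then show ?thesis
      by (simp only: inner_on_scale_left)
  qed
  have "inner_on M z v \<le> \<nu> * norm_on M v"
    unfolding \<nu>_def by (rule inner_on_le_norm_on)
  then have "\<rho> / \<nu> * inner_on M z v \<le> \<rho> / \<nu> * (\<nu> * norm_on M v)"
    using \<open>\<nu> > 0\<close> assms by (intro mult_left_mono) auto
  then have "\<rho> / \<nu> * inner_on M z v \<le> \<rho> * norm_on M v"
    using \<open>\<nu> > 0\<close> by simp
  moreover have "\<rho> / \<nu> * inner_on M z w = \<rho> * norm_on M w"
    using \<open>\<nu> > 0\<close> inner_w[of z] by (simp add: inner_on_self norm_w \<nu>_def power2_eq_square)
  ultimately show ?thesis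
    unfolding grad inner_on_diff_right by (simp add: algebra_simps)
qed

text \<open>The optimality condition of \<open>w\<close> as minimiser of
  \<open>\<alpha>/2 \<parallel>w\<parallel>\<^sup>2 - \<langle>z, w\<rangle> + \<rho> \<parallel>w\<parallel>\<close>.\<close>
lemma soft_threshold_optimality:
  fixes M :: nat and z v :: "nat \<Rightarrow> complex"
  assumes "\<alpha> > 0" and "\<rho> \<ge> 0"
  defines "w \<equiv> soft_threshold M \<alpha> \<rho> z"
  shows "inner_on M (\<lambda>m. of_real \<alpha> * w m - z m) (\<lambda>m. v m - w m)
           + \<rho> * (norm_on M v - norm_on M w) \<ge> 0"
proof (cases "norm_on M z > \<rho>")
  case True
  show ?thesis
    unfolding w_def by (rule soft_threshold_optimality_active[OF assms(1,2) True])
next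
  case False
  then have w: "w = (\<lambda>_. 0)"
    by (simp add: w_def soft_threshold_def fun_eq_iff)
  have "inner_on M z v \<le> \<rho> * norm_on M v"
    using inner_on_le_norm_on[of M z v] False norm_on_nonneg[of M v]
    by (meson mult_right_mono not_less order.trans)
  then show ?thesis
    by (simp add: w inner_on_minus_left norm_on_def)
qed

type_synonym coeffs = "nat \<Rightarrow> nat \<Rightarrow> nat \<Rightarrow> complex"

locale group_lasso_bcd =
  fixes N L M tmax :: nat and p \<rho> :: real and Y a :: "nat \<Rightarrow> nat \<Rightarrow> complex"
  assumes N_pos: "N \<ge> 1" and L_pos: "L \<ge> 1" and M_pos: "M \<ge> 1"
    and p_pos: "p > 0" and rho_pos: "\<rho> > 0"
    and pilot_unimodular: "\<And>n l. n < N \<Longrightarrow> l < L \<Longrightarrow> cmod (a n l) = 1"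
begin

definition blockset :: "(nat \<times> nat) set" where
  "blockset = {..<N} \<times> {..tmax}"

definition pilot :: "nat \<times> nat \<Rightarrow> nat \<Rightarrow> complex" where
  "pilot b i = a_ext L a (fst b) (snd b) i"

abbreviation blk :: "coeffs \<Rightarrow> nat \<times> nat \<Rightarrow> nat \<Rightarrow> complex" where
  "blk x b \<equiv> x (fst b) (snd b)"

definition residual :: "coeffs \<Rightarrow> nat \<Rightarrow> nat \<Rightarrow> complex" where
  "residual x i m = Y i m - of_real (sqrt p) * (\<Sum>b\<in>blockset. pilot b i * blk x b m)"

definition fit :: "coeffs \<Rightarrow> real" where
  "fit x = 1/2 * (\<Sum>i<L + tmax. \<Sum>m<M. (cmod (residual x i m))\<^sup>2)"

definition penalty :: "coeffs \<Rightarrow> real" where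
  "penalty x = \<rho> * (\<Sum>b\<in>blockset. norm_on M (blk x b))"

abbreviation objective :: "coeffs \<Rightarrow> real" where
  "objective \<equiv> Phi N L M tmax p \<rho> Y a"

definition fit_grad :: "coeffs \<Rightarrow> nat \<times> nat \<Rightarrow> nat \<Rightarrow> complex" where
  "fit_grad x b m = - of_real (sqrt p) * (\<Sum>i<L + tmax. cnj (pilot b i) * residual x i m)"

definition residual_change :: "coeffs \<Rightarrow> coeffs \<Rightarrow> nat \<Rightarrow> nat \<Rightarrow> complex" where
  "residual_change x y i m =
     of_real (sqrt p) * (\<Sum>b\<in>blockset. pilot b i * (blk y b m - blk x b m))"

lemma finite_blockset: "finite blockset"
  by (simp add: blockset_def)

lemma sqrt_p_square: "sqrt p * sqrt p = p"
  using p_pos by simp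

lemma objective_eq_fit_penalty: "objective x = fit x + penalty x"
  unfolding Phi_def fit_def penalty_def residual_def norm_on_def blockset_def pilot_def
  by (simp add: sum.cartesian_product case_prod_beta)

lemma norm_pilot_le_1: "b \<in> blockset \<Longrightarrow> cmod (pilot b i) \<le> 1"
  using pilot_unimodular by (auto simp: pilot_def a_ext_def blockset_def)

lemma pilot_energy:
  assumes "b \<in> blockset"
  shows "(\<Sum>i<L + tmax. (cmod (pilot b i))\<^sup>2) = real L"
proof -
  obtain n \<tau> where b: "b = (n, \<tau>)" "n < N" "\<tau> \<le> tmax"
    using assms by (auto simp: blockset_def)
  have "(\<Sum>i<L + tmax. (cmod (pilot b i))\<^sup>2) = (\<Sum>i<L + tmax. if i \<in> {\<tau>..<\<tau> + L} then 1 else 0)"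
    using b pilot_unimodular by (intro sum.cong) (auto simp: pilot_def a_ext_def)
  also have "\<dots> = real (card ({..<L + tmax} \<inter> {\<tau>..<\<tau> + L}))"
    by (auto simp: sum.If_cases intro!: arg_cong[where f = card])
  also have "{..<L + tmax} \<inter> {\<tau>..<\<tau> + L} = {\<tau>..<\<tau> + L}"
    using b by auto
  finally show ?thesis
    by simp
qed

lemma pilot_inner_self:
  assumes "b \<in> blockset"
  shows "(\<Sum>i<L + tmax. cnj (pilot b i) * pilot b i) = of_real (real L)"
proof -
  have "(\<Sum>i<L + tmax. cnj (pilot b i) * pilot b i) = (\<Sum>i<L + tmax. of_real ((cmod (pilot b i))\<^sup>2))"
    by (intro sum.cong refl) (metis complex_norm_square mult.commute)
  also have "\<dots> = of_real (\<Sum>i<L + tmax. (cmod (pilot b i))\<^sup>2)"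
    by (rule of_real_sum[symmetric])
  finally show ?thesis
    by (simp add: pilot_energy[OF assms])
qed

lemma residual_diff: "residual y i m = residual x i m - residual_change x y i m"
  by (simp add: residual_def residual_change_def sum_subtractf algebra_simps)

lemma residual_change_correlation:
  "(\<Sum>i<L + tmax. \<Sum>m<M. Re (cnj (residual x i m) * residual_change x y i m))
     = - (\<Sum>b\<in>blockset. inner_on M (fit_grad x b) (\<lambda>m. blk y b m - blk x b m))"
proof -
  define T where "T b i m = sqrt p * Re (pilot b i * cnj (residual x i m) * (blk y b m - blk x b m))"
    for b i m
  have "(\<Sum>i<L + tmax. \<Sum>m<M. Re (cnj (residual x i m) * residual_change x y i m))
      = (\<Sum>i<L + tmax. \<Sum>m<M. \<Sum>b\<in>blockset. T b i m)"
    by (simp add: residual_change_def T_def sum_distrib_left algebra_simps)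
  also have "\<dots> = (\<Sum>b\<in>blockset. \<Sum>m<M. \<Sum>i<L + tmax. T b i m)"
    by (subst sum.swap, subst (2) sum.swap, subst sum.swap) (rule refl)
  also have "\<dots> = - (\<Sum>b\<in>blockset. inner_on M (fit_grad x b) (\<lambda>m. blk y b m - blk x b m))"
  proof -
    have "Re (cnj (fit_grad x b m) * (blk y b m - blk x b m)) = - (\<Sum>i<L + tmax. T b i m)" for b m
      by (simp add: fit_grad_def T_def sum_distrib_left sum_distrib_right mult.assoc
          flip: sum_negf)
    then show ?thesis
      by (simp add: inner_on_def sum_negf)
  qed
  finally show ?thesis .
qed

lemma fit_expansion:
  "fit y = fit x + (\<Sum>b\<in>blockset. inner_on M (fit_grad x b) (\<lambda>m. blk y b m - blk x b m))
     + 1/2 * (\<Sum>i<L + tmax. \<Sum>m<M. (cmod (residual_change x y i m))\<^sup>2)"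
proof -
  have "fit y = 1/2 * (\<Sum>i<L + tmax. \<Sum>m<M. (cmod (residual x i m))\<^sup>2
      - 2 * Re (cnj (residual x i m) * residual_change x y i m) + (cmod (residual_change x y i m))\<^sup>2)"
    unfolding fit_def by (simp only: residual_diff[of y _ _ x] cmod_diff_square)
  also have "\<dots> = fit x - (\<Sum>i<L + tmax. \<Sum>m<M. Re (cnj (residual x i m) * residual_change x y i m))
      + 1/2 * (\<Sum>i<L + tmax. \<Sum>m<M. (cmod (residual_change x y i m))\<^sup>2)"
    by (simp add: fit_def sum.distrib sum_subtractf sum_distrib_left[symmetric] algebra_simps)
  finally show ?thesis
    unfolding residual_change_correlation by simp
qed

definition partial_residual :: "coeffs \<Rightarrow> nat \<times> nat \<Rightarrow> nat \<Rightarrow> nat \<Rightarrow> complex" where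
  "partial_residual x b i m = Y i m - of_real (sqrt p) *
     (\<Sum>b'\<in>blockset. if b' = b then 0 else pilot b' i * blk x b' m)"

definition correlation :: "coeffs \<Rightarrow> nat \<times> nat \<Rightarrow> nat \<Rightarrow> complex" where
  "correlation x b m = (\<Sum>i<L + tmax. cnj (pilot b i) * partial_residual x b i m)"

definition new_block :: "coeffs \<Rightarrow> nat \<times> nat \<Rightarrow> nat \<Rightarrow> complex" where
  "new_block x b = soft_threshold M (p * real L) \<rho> (\<lambda>m. of_real (sqrt p) * correlation x b m)"

abbreviation update :: "coeffs \<Rightarrow> nat \<times> nat \<Rightarrow> coeffs" where
  "update \<equiv> block_update N L M tmax p \<rho> Y a"

lemma new_block_eq:
  "new_block x b = (\<lambda>m. if m < M \<and> norm_on M (correlation x b) > \<rho> / sqrt p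
     then of_real (1 / (real L * sqrt p) - \<rho> / (real L * p * norm_on M (correlation x b)))
       * correlation x b m
     else 0)"
proof
  fix m
  define \<nu> where "\<nu> = norm_on M (correlation x b)"
  have "sqrt p > 0"
    using p_pos by simp
  then have cond: "(\<rho> < sqrt p * \<nu>) = (\<rho> / sqrt p < \<nu>)"
    by (simp add: pos_divide_less_eq mult.commute)
  have "(1 - \<rho> / (s * \<nu>)) / (s * s * real L) * s = 1 / (real L * s) - \<rho> / (real L * (s * s) * \<nu>)"
    if "s > 0" for s
    using that L_pos by (cases "\<nu> = 0") (simp_all add: field_simps)
  from this[OF \<open>sqrt p > 0\<close>]
  have "(1 - \<rho> / (sqrt p * \<nu>)) / (p * real L) * sqrt p
      = 1 / (real L * sqrt p) - \<rho> / (real L * p * \<nu>)"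
    by (simp only: sqrt_p_square)
  then have coeff: "of_real ((1 - \<rho> / (sqrt p * \<nu>)) / (p * real L)) * (of_real (sqrt p) * correlation x b m)
      = of_real (1 / (real L * sqrt p) - \<rho> / (real L * p * \<nu>)) * correlation x b m"
    by (simp only: mult.assoc[symmetric] of_real_mult[symmetric])
  show "new_block x b m = (if m < M \<and> \<nu> > \<rho> / sqrt p
     then of_real (1 / (real L * sqrt p) - \<rho> / (real L * p * \<nu>)) * correlation x b m else 0)"
    unfolding new_block_def soft_threshold_def norm_on_scale abs_of_pos[OF \<open>sqrt p > 0\<close>]
      \<nu>_def[symmetric] cond coeff ..
qed

lemma block_update_eq: "update x b = x(fst b := (x (fst b))(snd b := new_block x b))"
proof -
  have "(\<Sum>n<N. \<Sum>\<tau>\<le>tmax. if (n, \<tau>) = (fst b, snd b) then 0 else a_ext L a n \<tau> i * x n \<tau> m)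
     = (\<Sum>b'\<in>blockset. if b' = b then 0 else pilot b' i * blk x b' m)" for i m
    unfolding blockset_def pilot_def by (simp add: sum.cartesian_product case_prod_beta prod_eq_iff)
  note sum_eq = this
  show ?thesis
    unfolding block_update_def Let_def sum_eq new_block_eq correlation_def partial_residual_def
      norm_on_def pilot_def ..
qed

lemma update_same_block: "blk (update x b) b = new_block x b"
  by (simp add: block_update_eq)

lemma update_other_block: "b' \<noteq> b \<Longrightarrow> blk (update x b) b' = blk x b'"
  by (cases b; cases b') (auto simp: block_update_eq)

lemma residual_eq_partial_residual:
  assumes "b \<in> blockset"
  shows "residual x i m = partial_residual x b i m - of_real (sqrt p) * pilot b i * blk x b m"
proof -
  let ?f = "\<lambda>b'. pilot b' i * blk x b' m"
  have "(\<Sum>b'\<in>blockset. ?f b')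
      = (\<Sum>b'\<in>blockset. (if b' = b then 0 else ?f b') + (if b' = b then ?f b' else 0))"
    by (intro sum.cong) auto
  also have "\<dots> = (\<Sum>b'\<in>blockset. if b' = b then 0 else ?f b') + ?f b"
    using assms finite_blockset by (simp add: sum.distrib)
  finally show ?thesis
    by (simp add: residual_def partial_residual_def algebra_simps)
qed

lemma partial_residual_update: "partial_residual (update x b) b = partial_residual x b"
proof -
  have "(if b' = b then 0 else pilot b' i * blk (update x b) b' m)
      = (if b' = b then 0 else pilot b' i * blk x b' m)" for b' i m
    by (simp add: update_other_block)
  then show ?thesis
    unfolding partial_residual_def by simp
qed

lemma fit_grad_update:
  assumes "b \<in> blockset"
  shows "fit_grad (update x b) b m
    = of_real (p * real L) * new_block x b m - of_real (sqrt p) * correlation x b m"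
proof -
  have sqrt_p_twice: "of_real (sqrt p) * (of_real (sqrt p) * z) = of_real p * z" for z :: complex
    by (metis mult.assoc of_real_mult sqrt_p_square)
  have "fit_grad (update x b) b m = - of_real (sqrt p) * correlation x b m
      + of_real p * (\<Sum>i<L + tmax. cnj (pilot b i) * pilot b i) * new_block x b m"
    unfolding fit_grad_def residual_eq_partial_residual[OF assms, of "update x b"]
      partial_residual_update update_same_block correlation_def
    by (simp add: sum_distrib_left sum_distrib_right sum_subtractf sum_negf algebra_simps sqrt_p_twice)
  then show ?thesis
    using pilot_inner_self[OF assms] by (simp add: algebra_simps)
qed

lemma update_optimality:
  assumes "b \<in> blockset"
  shows "inner_on M (fit_grad (update x b) b) (\<lambda>m. v m - blk (update x b) b m)
           + \<rho> * (norm_on M v - norm_on M (blk (update x b) b)) \<ge> 0"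
proof -
  have "inner_on M (fit_grad (update x b) b) (\<lambda>m. v m - blk (update x b) b m)
      = inner_on M (\<lambda>m. of_real (p * real L) * new_block x b m - of_real (sqrt p) * correlation x b m)
          (\<lambda>m. v m - new_block x b m)"
    by (rule inner_on_cong) (simp_all add: fit_grad_update[OF assms] update_same_block)
  then show ?thesis
    using soft_threshold_optimality[of "p * real L" \<rho> M "\<lambda>m. of_real (sqrt p) * correlation x b m" v]
      p_pos L_pos rho_pos
    by (simp add: update_same_block new_block_def)
qed

text \<open>The block Hessian is \<open>p L\<close> times the identity, since the pilots are unimodular.\<close>
lemma objective_block_change:
  assumes "b \<in> blockset" and same: "\<And>b'. b' \<in> blockset \<Longrightarrow> b' \<noteq> b \<Longrightarrow> blk y b' = blk z b'"
  shows "objective y - objective z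
    = inner_on M (fit_grad z b) (\<lambda>m. blk y b m - blk z b m) + \<rho> * (norm_on M (blk y b) - norm_on M (blk z b))
      + p * real L / 2 * (\<Sum>m<M. (cmod (blk y b m - blk z b m))\<^sup>2)"
proof -
  have grad: "(\<Sum>b'\<in>blockset. inner_on M (fit_grad z b') (\<lambda>m. blk y b' m - blk z b' m))
      = inner_on M (fit_grad z b) (\<lambda>m. blk y b m - blk z b m)"
    by (rule sum_eq_single[OF finite_blockset \<open>b \<in> blockset\<close>]) (simp add: same inner_on_def)
  have change: "residual_change z y i m = of_real (sqrt p) * pilot b i * (blk y b m - blk z b m)" for i m
  proof -
    have "(\<Sum>b'\<in>blockset. pilot b' i * (blk y b' m - blk z b' m)) = pilot b i * (blk y b m - blk z b m)"
      by (rule sum_eq_single[OF finite_blockset \<open>b \<in> blockset\<close>]) (simp add: same)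
    then show ?thesis
      by (simp add: residual_change_def)
  qed
  have "(\<Sum>i<L + tmax. \<Sum>m<M. (cmod (residual_change z y i m))\<^sup>2)
      = (\<Sum>m<M. \<Sum>i<L + tmax. p * (cmod (pilot b i))\<^sup>2 * (cmod (blk y b m - blk z b m))\<^sup>2)"
    unfolding change using p_pos by (subst sum.swap) (simp add: norm_mult power_mult_distrib)
  also have "\<dots> = p * real L * (\<Sum>m<M. (cmod (blk y b m - blk z b m))\<^sup>2)"
    by (simp add: pilot_energy[OF \<open>b \<in> blockset\<close>] mult.assoc flip: sum_distrib_left sum_distrib_right)
  finally have quadratic: "1/2 * (\<Sum>i<L + tmax. \<Sum>m<M. (cmod (residual_change z y i m))\<^sup>2)
      = p * real L / 2 * (\<Sum>m<M. (cmod (blk y b m - blk z b m))\<^sup>2)"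
    by simp
  have "(\<Sum>b'\<in>blockset. norm_on M (blk y b') - norm_on M (blk z b'))
      = norm_on M (blk y b) - norm_on M (blk z b)"
    by (rule sum_eq_single[OF finite_blockset \<open>b \<in> blockset\<close>]) (simp add: same)
  then have "penalty y - penalty z = \<rho> * (norm_on M (blk y b) - norm_on M (blk z b))"
    by (simp add: penalty_def sum_subtractf flip: right_diff_distrib)
  then show ?thesis
    using fit_expansion[of y z] grad quadratic by (simp add: objective_eq_fit_penalty)
qed

lemma update_decrease:
  assumes "b \<in> blockset"
  shows "objective x - objective (update x b)
    \<ge> p * real L / 2 * (\<Sum>m<M. (cmod (blk (update x b) b m - blk x b m))\<^sup>2)"
proof -
  have "objective x - objective (update x b)
      = inner_on M (fit_grad (update x b) b) (\<lambda>m. blk x b m - blk (update x b) b m)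
        + \<rho> * (norm_on M (blk x b) - norm_on M (blk (update x b) b))
        + p * real L / 2 * (\<Sum>m<M. (cmod (blk x b m - blk (update x b) b m))\<^sup>2)"
    by (rule objective_block_change[OF assms]) (simp add: update_other_block)
  then show ?thesis
    using update_optimality[OF assms, of x "blk x b"] by (simp add: norm_minus_commute)
qed

lemma fit_grad_lipschitz:
  assumes "b \<in> blockset"
  shows "cmod (fit_grad z b m - fit_grad w b m)
    \<le> p * real (L + tmax) * (\<Sum>b'\<in>blockset. cmod (blk z b' m - blk w b' m))"
proof -
  define \<delta> where "\<delta> = (\<Sum>b'\<in>blockset. cmod (blk z b' m - blk w b' m))"
  have change: "cmod (residual_change w z i m) \<le> sqrt p * \<delta>" for i
  proof -
    have "cmod (\<Sum>b'\<in>blockset. pilot b' i * (blk z b' m - blk w b' m))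
        \<le> (\<Sum>b'\<in>blockset. cmod (pilot b' i * (blk z b' m - blk w b' m)))"
      by (rule norm_sum)
    also have "\<dots> \<le> \<delta>"
      unfolding \<delta>_def by (intro sum_mono) (simp add: norm_mult norm_pilot_le_1 mult_left_le_one_le)
    finally show ?thesis
      using p_pos by (simp add: residual_change_def norm_mult mult_left_mono)
  qed
  have "fit_grad z b m - fit_grad w b m
      = of_real (sqrt p) * (\<Sum>i<L + tmax. cnj (pilot b i) * residual_change w z i m)"
    unfolding fit_grad_def residual_diff[of z _ _ w]
    by (simp add: sum_distrib_left sum_subtractf right_diff_distrib sum_negf algebra_simps)
  then have "cmod (fit_grad z b m - fit_grad w b m)
      = sqrt p * cmod (\<Sum>i<L + tmax. cnj (pilot b i) * residual_change w z i m)"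
    using p_pos by (simp add: norm_mult)
  also have "\<dots> \<le> sqrt p * (\<Sum>i<L + tmax. cmod (cnj (pilot b i) * residual_change w z i m))"
    using p_pos by (intro mult_left_mono norm_sum) simp
  also have "\<dots> \<le> sqrt p * (\<Sum>i<L + tmax. sqrt p * \<delta>)"
  proof (intro mult_left_mono sum_mono)
    fix i
    show "cmod (cnj (pilot b i) * residual_change w z i m) \<le> sqrt p * \<delta>"
      using change[of i] norm_pilot_le_1[OF assms, of i]
      by (simp add: norm_mult) (meson mult_left_le_one_le norm_ge_zero order_trans)
  qed (use p_pos in simp)
  also have "\<dots> = p * real (L + tmax) * \<delta>"
    using p_pos by (simp add: mult.assoc mult.left_commute)
  finally show ?thesis
    unfolding \<delta>_def .
qed

lemma foldl_update_other_block: "b \<notin> set bs \<Longrightarrow> blk (foldl update x bs) b = blk x b"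
  by (induction bs arbitrary: x) (auto simp: update_other_block)

lemma foldl_update_decrease:
  assumes "distinct bs" and "set bs \<subseteq> blockset"
  shows "objective x - objective (foldl update x bs)
    \<ge> p * real L / 2 * (\<Sum>b\<in>set bs. \<Sum>m<M. (cmod (blk (foldl update x bs) b m - blk x b m))\<^sup>2)"
  using assms
proof (induction bs arbitrary: x)
  case Nil
  then show ?case by simp
next
  case (Cons b bs)
  define x' where "x' = update x b"
  define z where "z = foldl update x' bs"
  have "b \<in> blockset" and "b \<notin> set bs"
    using Cons.prems by auto
  have z_b: "blk z b = blk x' b"
    unfolding z_def using \<open>b \<notin> set bs\<close> by (rule foldl_update_other_block)
  have "objective x' - objective z
      \<ge> p * real L / 2 * (\<Sum>b\<in>set bs. \<Sum>m<M. (cmod (blk z b m - blk x' b m))\<^sup>2)"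
    unfolding z_def using Cons by auto
  also have "(\<Sum>b\<in>set bs. \<Sum>m<M. (cmod (blk z b m - blk x' b m))\<^sup>2)
      = (\<Sum>b\<in>set bs. \<Sum>m<M. (cmod (blk z b m - blk x b m))\<^sup>2)"
    using \<open>b \<notin> set bs\<close> unfolding x'_def by (intro sum.cong refl) (metis update_other_block)
  finally have tail: "objective x' - objective z
      \<ge> p * real L / 2 * (\<Sum>b\<in>set bs. \<Sum>m<M. (cmod (blk z b m - blk x b m))\<^sup>2)" .
  have head: "objective x - objective x' \<ge> p * real L / 2 * (\<Sum>m<M. (cmod (blk z b m - blk x b m))\<^sup>2)"
    using update_decrease[OF \<open>b \<in> blockset\<close>, of x] unfolding z_b x'_def .
  have "foldl update x (b # bs) = z"
    by (simp add: z_def x'_def)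
  then show ?case
    using head tail \<open>b \<notin> set bs\<close> by (simp add: distrib_left)
qed

text \<open>Block \<open>b\<close> is optimal at \<open>update x b\<close>; moving on to \<open>z\<close> without touching \<open>b\<close>
  perturbs its optimality condition only through the Lipschitz change of its partial gradient.\<close>
lemma update_optimality_perturbed:
  assumes "b \<in> blockset" and z_b: "blk z b = blk (update x b) b"
  shows "inner_on M (fit_grad z b) (\<lambda>m. blk z b m - blk y b m)
      + \<rho> * (norm_on M (blk z b) - norm_on M (blk y b))
    \<le> (\<Sum>m<M. p * real (L + tmax) * (\<Sum>b'\<in>blockset. cmod (blk z b' m - blk (update x b) b' m))
      * cmod (blk z b m - blk y b m))"
proof -
  have "inner_on M (fit_grad (update x b) b) (\<lambda>m. blk y b m - blk z b m)
      + \<rho> * (norm_on M (blk y b) - norm_on M (blk z b)) \<ge> 0"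
    using update_optimality[OF assms(1), of x "blk y b"] unfolding z_b .
  then have "inner_on M (fit_grad z b) (\<lambda>m. blk z b m - blk y b m)
        + \<rho> * (norm_on M (blk z b) - norm_on M (blk y b))
      \<le> inner_on M (\<lambda>m. fit_grad z b m - fit_grad (update x b) b m) (\<lambda>m. blk z b m - blk y b m)"
    by (simp add: inner_on_diff_left inner_on_diff_right right_diff_distrib)
  also have "\<dots> \<le> (\<Sum>m<M. cmod (fit_grad z b m - fit_grad (update x b) b m) * cmod (blk z b m - blk y b m))"
    by (rule inner_on_le_sum_cmod)
  also have "\<dots> \<le> (\<Sum>m<M. p * real (L + tmax) * (\<Sum>b'\<in>blockset. cmod (blk z b' m - blk (update x b) b' m))
      * cmod (blk z b m - blk y b m))"
    by (intro sum_mono mult_right_mono fit_grad_lipschitz[OF assms(1)]) auto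
  finally show ?thesis .
qed

lemma foldl_update_optimality_defect:
  assumes "distinct bs" and "set bs \<subseteq> blockset"
  shows "(\<Sum>b\<in>set bs. inner_on M (fit_grad (foldl update x bs) b) (\<lambda>m. blk (foldl update x bs) b m - blk y b m)
            + \<rho> * (norm_on M (blk (foldl update x bs) b) - norm_on M (blk y b)))
    \<le> (\<Sum>b\<in>set bs. \<Sum>m<M. p * real (L + tmax)
            * (\<Sum>b'\<in>blockset. cmod (blk (foldl update x bs) b' m - blk x b' m))
            * cmod (blk (foldl update x bs) b m - blk y b m))"
  using assms
proof (induction bs arbitrary: x)
  case Nil
  then show ?case by simp
next
  case (Cons b bs)
  define x' where "x' = update x b"
  define z where "z = foldl update x' bs"
  have "b \<in> blockset" and "b \<notin> set bs"
    using Cons.prems by auto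
  have z_b: "blk z b = blk x' b"
    unfolding z_def using \<open>b \<notin> set bs\<close> by (rule foldl_update_other_block)
  define bound where "bound x\<^sub>0 b\<^sub>0 m = p * real (L + tmax) * (\<Sum>b'\<in>blockset. cmod (blk z b' m - blk x\<^sub>0 b' m))
      * cmod (blk z b\<^sub>0 m - blk y b\<^sub>0 m)" for x\<^sub>0 b\<^sub>0 m
  have "cmod (blk z b' m - blk x' b' m) \<le> cmod (blk z b' m - blk x b' m)" for b' m
    by (cases "b' = b") (auto simp: z_b x'_def update_other_block)
  then have bound_mono: "bound x' b'' m \<le> bound x b'' m" for b'' m
    unfolding bound_def using p_pos by (intro mult_right_mono mult_left_mono sum_mono) auto
  have "(\<Sum>b\<in>set bs. inner_on M (fit_grad z b) (\<lambda>m. blk z b m - blk y b m)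
        + \<rho> * (norm_on M (blk z b) - norm_on M (blk y b)))
      \<le> (\<Sum>b\<in>set bs. \<Sum>m<M. bound x' b m)"
    unfolding z_def bound_def using Cons by auto
  also have "\<dots> \<le> (\<Sum>b\<in>set bs. \<Sum>m<M. bound x b m)"
    by (intro sum_mono bound_mono)
  finally have tail: "(\<Sum>b\<in>set bs. inner_on M (fit_grad z b) (\<lambda>m. blk z b m - blk y b m)
        + \<rho> * (norm_on M (blk z b) - norm_on M (blk y b)))
      \<le> (\<Sum>b\<in>set bs. \<Sum>m<M. bound x b m)" .
  have "inner_on M (fit_grad z b) (\<lambda>m. blk z b m - blk y b m)
        + \<rho> * (norm_on M (blk z b) - norm_on M (blk y b))
      \<le> (\<Sum>m<M. bound x' b m)"
    using update_optimality_perturbed[OF \<open>b \<in> blockset\<close>, of z x y] z_b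
    unfolding bound_def x'_def by simp
  also have "\<dots> \<le> (\<Sum>m<M. bound x b m)"
    by (intro sum_mono bound_mono)
  finally have head: "inner_on M (fit_grad z b) (\<lambda>m. blk z b m - blk y b m)
        + \<rho> * (norm_on M (blk z b) - norm_on M (blk y b))
      \<le> (\<Sum>m<M. bound x b m)" .
  have "foldl update x (b # bs) = z"
    by (simp add: z_def x'_def)
  then show ?case
    using head tail \<open>b \<notin> set bs\<close> by (simp add: bound_def)
qed

abbreviation sweep :: "coeffs \<Rightarrow> coeffs" where
  "sweep \<equiv> outer_iter N L M tmax p \<rho> Y a"

lemma sweep_eq_foldl: "sweep x = foldl update x (blocks N tmax)"
  by (simp add: outer_iter_def)

lemma blocks_eq_product: "blocks N tmax = List.product [0..<N] [0..<Suc tmax]"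
  unfolding blocks_def product_concat_map by simp

lemma distinct_blocks: "distinct (blocks N tmax)"
  by (simp add: blocks_eq_product distinct_product)

lemma set_blocks: "set (blocks N tmax) = blockset"
  by (auto simp: blocks_eq_product blockset_def)

lemma sweep_decrease:
  "objective x - objective (sweep x)
    \<ge> p * real L / 2 * (\<Sum>b\<in>blockset. \<Sum>m<M. (cmod (blk (sweep x) b m - blk x b m))\<^sup>2)"
  using foldl_update_decrease[OF distinct_blocks, of x] by (simp add: set_blocks sweep_eq_foldl)

lemma sweep_objective_diff:
  "objective (sweep x) - objective y
    \<le> (\<Sum>b\<in>blockset. \<Sum>m<M. p * real (L + tmax) * (\<Sum>b'\<in>blockset. cmod (blk (sweep x) b' m - blk x b' m))
         * cmod (blk (sweep x) b m - blk y b m))"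
proof -
  define z where "z = sweep x"
  have "fit z - fit y \<le> (\<Sum>b\<in>blockset. inner_on M (fit_grad z b) (\<lambda>m. blk z b m - blk y b m))"
    using fit_expansion[of y z]
    by (simp add: inner_on_diff_right sum_subtractf sum_nonneg)
  moreover have "penalty z - penalty y = (\<Sum>b\<in>blockset. \<rho> * (norm_on M (blk z b) - norm_on M (blk y b)))"
    by (simp add: penalty_def sum_subtractf sum_distrib_left right_diff_distrib)
  ultimately have "objective z - objective y
      \<le> (\<Sum>b\<in>blockset. inner_on M (fit_grad z b) (\<lambda>m. blk z b m - blk y b m)
          + \<rho> * (norm_on M (blk z b) - norm_on M (blk y b)))"
    by (simp add: objective_eq_fit_penalty sum.distrib)
  also have "\<dots> \<le> (\<Sum>b\<in>blockset. \<Sum>m<M. p * real (L + tmax)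
      * (\<Sum>b'\<in>blockset. cmod (blk z b' m - blk x b' m)) * cmod (blk z b m - blk y b m))"
    using foldl_update_optimality_defect[OF distinct_blocks, of x y]
    by (simp add: set_blocks z_def sweep_eq_foldl)
  finally show ?thesis
    unfolding z_def .
qed

lemma objective_nonneg: "objective x \<ge> 0"
  using rho_pos
  by (simp add: objective_eq_fit_penalty fit_def penalty_def sum_nonneg norm_on_nonneg)

lemma entry_le_objective:
  assumes "b \<in> blockset" and "m < M"
  shows "\<rho> * cmod (blk x b m) \<le> objective x"
proof -
  have "cmod (blk x b m) = sqrt ((cmod (blk x b m))\<^sup>2)"
    by simp
  also have "\<dots> \<le> norm_on M (blk x b)"
    unfolding norm_on_def using assms by (intro real_sqrt_le_mono member_le_sum) auto
  also have "\<dots> \<le> (\<Sum>b'\<in>blockset. norm_on M (blk x b'))"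
    using assms finite_blockset by (intro member_le_sum) (auto simp: norm_on_nonneg)
  finally have "\<rho> * cmod (blk x b m) \<le> penalty x"
    unfolding penalty_def using rho_pos by (intro mult_left_mono) auto
  moreover have "fit x \<ge> 0"
    by (simp add: fit_def sum_nonneg)
  ultimately show ?thesis
    by (simp add: objective_eq_fit_penalty)
qed

lemma sweep_objective_diff_bounded:
  assumes bounded: "\<And>b m. b \<in> blockset \<Longrightarrow> m < M \<Longrightarrow> cmod (blk (sweep x) b m) \<le> B \<and> cmod (blk y b m) \<le> B"
  shows "objective (sweep x) - objective y
    \<le> 2 * B * p * real (L + tmax) * real (card blockset)
       * (\<Sum>b\<in>blockset. \<Sum>m<M. cmod (blk (sweep x) b m - blk x b m))"
proof -
  define \<delta> where "\<delta> m = (\<Sum>b'\<in>blockset. cmod (blk (sweep x) b' m - blk x b' m))" for m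
  have "objective (sweep x) - objective y
      \<le> (\<Sum>b\<in>blockset. \<Sum>m<M. p * real (L + tmax) * \<delta> m * cmod (blk (sweep x) b m - blk y b m))"
    using sweep_objective_diff[of x y] unfolding \<delta>_def .
  also have "\<dots> \<le> (\<Sum>b\<in>blockset. \<Sum>m<M. p * real (L + tmax) * \<delta> m * (2 * B))"
  proof (intro sum_mono mult_left_mono)
    fix b m
    assume "b \<in> blockset" and "m \<in> {..<M}"
    then show "cmod (blk (sweep x) b m - blk y b m) \<le> 2 * B"
      using bounded norm_triangle_ineq4[of "blk (sweep x) b m" "blk y b m"] by fastforce
    show "0 \<le> p * real (L + tmax) * \<delta> m"
      using p_pos by (simp add: \<delta>_def sum_nonneg)
  qed
  also have "\<dots> = 2 * B * p * real (L + tmax) * real (card blockset) * (\<Sum>m<M. \<delta> m)"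
    by (simp add: sum_distrib_left sum_distrib_right mult_ac)
  also have "(\<Sum>m<M. \<delta> m) = (\<Sum>b\<in>blockset. \<Sum>m<M. cmod (blk (sweep x) b m - blk x b m))"
    unfolding \<delta>_def by (rule sum.swap)
  finally show ?thesis .
qed

text \<open>Entries of points with \<open>objective \<le> c\<close> are bounded by \<open>c / \<rho>\<close>; the other points
  lie above \<open>objective (sweep x)\<close> anyway.\<close>
lemma sweep_gap_le_change:
  assumes "objective (sweep x) \<le> c"
  shows "objective (sweep x) - Gamma_opt N L M tmax p \<rho> Y a
    \<le> 2 * (c / \<rho>) * p * real (L + tmax) * real (card blockset)
       * (\<Sum>b\<in>blockset. \<Sum>m<M. cmod (blk (sweep x) b m - blk x b m))"
    (is "_ \<le> ?K * ?\<Delta>")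
proof -
  have "?K * ?\<Delta> \<ge> 0"
    using assms objective_nonneg[of "sweep x"] rho_pos p_pos
    by (intro mult_nonneg_nonneg sum_nonneg) auto
  have "objective (sweep x) - ?K * ?\<Delta> \<le> (INF y. objective y)"
  proof (rule cINF_greatest)
    fix y
    show "objective (sweep x) - ?K * ?\<Delta> \<le> objective y"
    proof (cases "objective y \<le> c")
      case True
      have "cmod (blk z b m) \<le> c / \<rho>" if "objective z \<le> c" "b \<in> blockset" "m < M" for z b m
        using entry_le_objective[OF that(2,3), of z] that(1) rho_pos by (simp add: field_simps)
      then have "objective (sweep x) - objective y \<le> ?K * ?\<Delta>"
        using True assms by (intro sweep_objective_diff_bounded) auto
      then show ?thesis
        by linarith
    next
      case False
      then show ?thesis
        using assms \<open>?K * ?\<Delta> \<ge> 0\<close> by linarith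
    qed
  qed simp
  then show ?thesis
    by (simp add: Gamma_opt_def)
qed

definition optimality_gap :: "nat \<Rightarrow> real" where
  "optimality_gap t = Gamma N L M tmax p \<rho> Y a t - Gamma_opt N L M tmax p \<rho> Y a"

lemma Gamma_opt_le_objective: "Gamma_opt N L M tmax p \<rho> Y a \<le> objective x"
  unfolding Gamma_opt_def by (rule cINF_lower) (auto intro: bdd_belowI objective_nonneg)

lemma optimality_gap_nonneg: "optimality_gap t \<ge> 0"
  by (simp add: optimality_gap_def Gamma_def Gamma_opt_le_objective)

abbreviation iter :: "nat \<Rightarrow> coeffs" where
  "iter \<equiv> iterate N L M tmax p \<rho> Y a"

lemma iter_Suc: "iter (Suc t) = sweep (iter t)"
  by (simp add: iterate_def)

definition step_size :: "nat \<Rightarrow> (nat \<times> nat) \<times> nat \<Rightarrow> real" where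
  "step_size t bm = (case bm of (b, m) \<Rightarrow> cmod (blk (iter (Suc t)) b m - blk (iter t) b m))"

lemma optimality_gap_decrease:
  "p * real L / 2 * (\<Sum>bm\<in>blockset \<times> {..<M}. (step_size t bm)\<^sup>2)
    \<le> optimality_gap t - optimality_gap (Suc t)"
  using sweep_decrease[of "iter t"]
  by (simp add: optimality_gap_def Gamma_def iter_Suc step_size_def sum.cartesian_product case_prod_beta)

lemma objective_iter_le_initial: "objective (iter t) \<le> objective (iter 0)"
proof (induction t)
  case (Suc t)
  have "0 \<le> p * real L / 2 * (\<Sum>bm\<in>blockset \<times> {..<M}. (step_size t bm)\<^sup>2)"
    using p_pos by (simp add: sum_nonneg)
  then show ?case
    using Suc optimality_gap_decrease[of t] by (simp add: optimality_gap_def Gamma_def)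
qed simp

lemma optimality_gap_le_step_size:
  obtains K where "K > 0"
    and "\<And>t. optimality_gap (Suc t) \<le> K * (\<Sum>bm\<in>blockset \<times> {..<M}. step_size t bm)"
proof
  define c where "c = objective (iter 0) + \<rho>"
  have "(0, 0) \<in> blockset"
    using N_pos by (simp add: blockset_def)
  then have "card blockset > 0"
    using finite_blockset by (auto simp: card_gt_0_iff)
  moreover have "c > 0"
    using objective_nonneg[of "iter 0"] rho_pos by (simp add: c_def)
  ultimately show "2 * (c / \<rho>) * p * real (L + tmax) * real (card blockset) > 0"
    using rho_pos p_pos L_pos by (intro mult_pos_pos divide_pos_pos) auto
  fix t
  have "objective (sweep (iter t)) \<le> c"
    using objective_iter_le_initial[of "Suc t"] rho_pos by (simp add: c_def iter_Suc)
  then show "optimality_gap (Suc t) \<le> 2 * (c / \<rho>) * p * real (L + tmax) * real (card blockset)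
      * (\<Sum>bm\<in>blockset \<times> {..<M}. step_size t bm)"
    using sweep_gap_le_change[of "iter t" c]
    by (simp add: optimality_gap_def Gamma_def iter_Suc step_size_def sum.cartesian_product case_prod_beta)
qed

lemma optimality_gap_quadratic_decrease:
  obtains q where "q > 0"
    and "\<And>t. q * (optimality_gap (Suc t))\<^sup>2 \<le> optimality_gap t - optimality_gap (Suc t)"
proof -
  obtain K where "K > 0"
    and gap_le: "\<And>t. optimality_gap (Suc t) \<le> K * (\<Sum>bm\<in>blockset \<times> {..<M}. step_size t bm)"
    using optimality_gap_le_step_size by blast
  define n where "n = real (card (blockset \<times> {..<M}))"
  have "n > 0"
    using N_pos M_pos by (simp add: n_def blockset_def card_cartesian_product del: of_nat_mult)
  define q where "q = p * real L / 2 / (n * K\<^sup>2)"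
  show ?thesis
  proof
    show "q > 0"
      using \<open>n > 0\<close> \<open>K > 0\<close> p_pos L_pos by (simp add: q_def)
    fix t
    have "(optimality_gap (Suc t))\<^sup>2 \<le> K\<^sup>2 * (\<Sum>bm\<in>blockset \<times> {..<M}. step_size t bm)\<^sup>2"
      using gap_le optimality_gap_nonneg by (simp add: power_mono flip: power_mult_distrib)
    also have "\<dots> \<le> K\<^sup>2 * ((\<Sum>bm\<in>blockset \<times> {..<M}. (step_size t bm)\<^sup>2) * n)"
      unfolding n_def by (intro mult_left_mono sum_squared_le_sum_of_squares) simp
    finally have "q * (optimality_gap (Suc t))\<^sup>2
        \<le> q * (K\<^sup>2 * n) * (\<Sum>bm\<in>blockset \<times> {..<M}. (step_size t bm)\<^sup>2)"
      using \<open>q > 0\<close> by (simp add: mult_left_mono mult_ac)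
    also have "q * (K\<^sup>2 * n) = p * real L / 2"
      using \<open>n > 0\<close> \<open>K > 0\<close> by (simp add: q_def)
    finally show "q * (optimality_gap (Suc t))\<^sup>2 \<le> optimality_gap t - optimality_gap (Suc t)"
      using optimality_gap_decrease[of t] by linarith
  qed
qed

lemma optimality_gap_rate:
  obtains W where "W > 0" and "\<And>t. optimality_gap t \<le> W / (real t + 1)"
proof -
  obtain q where "q > 0" and "\<And>t. q * (optimality_gap (Suc t))\<^sup>2 \<le> optimality_gap t - optimality_gap (Suc t)"
    using optimality_gap_quadratic_decrease by blast
  then have "optimality_gap t \<le> max (optimality_gap 0) (2 / q) / (real t + 1)" for t
    using optimality_gap_nonneg by (intro sublinear_rate_of_quadratic_decrease)
  moreover have "max (optimality_gap 0) (2 / q) > 0"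
    using \<open>q > 0\<close> by (simp add: less_max_iff_disj)
  ultimately show ?thesis
    using that by blast
qed

end

lemma total_ops_le:
  assumes "tmax \<ge> 1"
  shows "real (total_ops N L M tmax t) \<le> 2 * real t * real ((L + tmax) * tmax * M * N)"
proof -
  have "real (total_ops N L M tmax t) = real t * (real tmax + 1) * real ((L + tmax) * M * N)"
    by (simp add: total_ops_def block_update_ops_def algebra_simps)
  also have "\<dots> \<le> real t * (2 * real tmax) * real ((L + tmax) * M * N)"
    using assms by (intro mult_left_mono mult_right_mono) auto
  finally show ?thesis
    by (simp add: algebra_simps)
qed

theorem theorem3:
  fixes N L M tmax :: nat and p \<rho> :: real
    and Y a :: "nat \<Rightarrow> nat \<Rightarrow> complex"
  assumes "N \<ge> 1" "L \<ge> 1" "M \<ge> 1" "tmax \<ge> 1" "p > 0" "\<rho> > 0"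
    and "\<And>n l. n < N \<Longrightarrow> l < L \<Longrightarrow> cmod (a n l) = 1"
  shows "\<exists>C>0. \<forall>\<epsilon>>0. \<exists>t.
           Gamma N L M tmax p \<rho> Y a t - Gamma_opt N L M tmax p \<rho> Y a \<le> \<epsilon> \<and>
           real (total_ops N L M tmax t) \<le> C * real ((L + tmax) * tmax * M * N) / \<epsilon>"
proof -
  interpret group_lasso_bcd N L M tmax p \<rho> Y a
    using assms by unfold_locales auto
  obtain W where "W > 0" and rate: "\<And>t. optimality_gap t \<le> W / (real t + 1)"
    using optimality_gap_rate by blast
  define K where "K = real ((L + tmax) * tmax * M * N)"
  have "\<exists>t. optimality_gap t \<le> \<epsilon> \<and> real (total_ops N L M tmax t) \<le> 2 * W * K / \<epsilon>"
    if "\<epsilon> > 0" for \<epsilon>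
  proof -
    obtain t where "optimality_gap t \<le> \<epsilon>" and "real t \<le> W / \<epsilon>"
      using iterations_to_accuracy[OF rate _ \<open>\<epsilon> > 0\<close>] \<open>W > 0\<close> by auto
    moreover have "2 * real t * K \<le> 2 * (W / \<epsilon>) * K"
      using \<open>real t \<le> W / \<epsilon>\<close> by (intro mult_right_mono) (auto simp: K_def)
    ultimately show ?thesis
      using total_ops_le[OF \<open>tmax \<ge> 1\<close>, of N L M t] by (intro exI[of _ t]) (simp add: K_def)
  qed
  then show ?thesis
    using \<open>W > 0\<close> unfolding optimality_gap_def K_def by (intro exI[of _ "2 * W"]) auto
qed

end
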